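(* Let $\mathfrak g$, $m\in\mathbb Z_{>1}$, $Q_m(\mathfrak g)$ and $R_i$ ($i\in S$) be as in the context, and consider a seed $(Q_m(\mathfrak g),\mathbf X,\mathbf A)$. Let $p^\ast:\mathbb C(\mathbf X)\to\mathbb C(\mathbf A)$ be the map $p^\ast(X^i_n)=\prod_{v^j_k}(A^j_k)^{\varepsilon_{v^i_n,v^j_k}}$, the product over all vertices of $Q_m(\mathfrak g)$. Then for every $i\in S$ and every vertex $v^j_n$, $R_i^\ast(p^\ast(X^j_n))=p^\ast(X^j_n)$, where $R_i^\ast$ denotes the action of $R_i$ on $\mathbb C(\mathbf A)$; that is, $R_i$ belongs to the peripheral subgroup of the cluster modular group $\Gamma_{Q_m(\mathfrak g)}$.
   Context: Let $\mathfrak g$ be a finite-dimensional complex simple Lie algebra of rank $\ell$, $S=\{1,\dots,\ell\}$, of type $A_\ell$, $B_\ell$, $C_\ell$, $D_\ell$ ($\ell\ge4$), $E_{6,7,8}$, $F_4$ or $G_2$, with simple roots labelled: for $A_\ell,B_\ell,C_\ell$ the Dynkin diagram is the chain $1-2-\cdots-\ell$ ($\alpha_\ell$ short in $B_\ell$, long in $C_\ell$); $D_\ell$: chain $1-\cdots-(\ell-1)$ plus edge $(\ell-2)-\ell$; $E_\ell$: chain $1-2-3-5-6-\cdots-\ell$ plus edge $3-4$; $F_4$: chain $1-2-3-4$ with $\alpha_1,\alpha_2$ long; $G_2$: $\alpha_2$ long. Put $d_i=(\alpha_i,\alpha_i)/2$, normalized so that $d_i=1$ for all $i$ in types $A,D,E$;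 $(d_i)=(1,\dots,1,\tfrac12)$ for $B_\ell$; $(1,\dots,1,2)$ for $C_\ell$; $(1,1,\tfrac12,\tfrac12)$ for $F_4$; $(1,3)$ for $G_2$. Let $d=\min_id_i$, $d'=\max_id_i$. Quiver $Q(\mathfrak g)$: vertex set $\{v^i_n: i\in S, n\in d\mathbb Z\}$ with arrows, for all $n$: (simply-laced) orient each Dynkin edge from larger to smaller label, giving $C(\mathfrak g)$; arrows $v^i_n\to v^i_{n+1}$, and for each arrow $i\to j$ of $C(\mathfrak g)$ arrows $v^i_n\to v^j_n$ and $v^j_{n+1}\to v^i_n$. ($B_\ell$, $n\in\frac12\mathbb Z$) $v^i_n\to v^i_{n+1}$ for $i\le\ell-1$; $v^i_n\to v^{i-1}_n$, $v^{i-1}_{n+1}\to v^i_n$ for $2\le i\le\ell-1$; $v^\ell_n\to v^\ell_{n+1/2}$, $v^\ell_n\to v^{\ell-1}_{n-1/2}$, $v^{\ell-1}_{n+1/2}\to v^\ell_n$. ($C_\ell$, $n\in\mathbb Z$) $v^i_n\to v^i_{n+1}$ for $i\le\ell-1$; $v^i_n\to v^{i-1}_n$, $v^{i-1}_{n+1}\to v^i_n$ for $2\le i\le\ell-1$; $v^\ell_n\to v^\ell_{n+2}$, $v^\ell_n\to v^{\ell-1}_n$, $v^{\ell-1}_{n+2}\to v^\ell_n$. ($F_4$, $n\in\frac12\mathbb Z$) $v^i_n\to v^i_{n+1}$ ($i=1,2$); $v^2_n\to v^1_n$, $v^1_{n+1}\to v^2_n$; $v^3_n\to v^3_{n+1/2}$,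 $v^3_n\to v^2_{n-1/2}$, $v^2_{n+1/2}\to v^3_n$; $v^4_n\to v^4_{n+1/2}$, $v^4_n\to v^3_n$, $v^3_{n+1/2}\to v^4_n$. ($G_2$, $n\in\mathbb Z$) $v^1_n\to v^1_{n+1}$, $v^2_n\to v^2_{n+3}$, $v^2_n\to v^1_n$, $v^1_{n+3}\to v^2_n$. For an integer $m>1$, $Q_m(\mathfrak g)$ has vertex set $\{v^i_n: i\in S, n\in d\mathbb Z/d'm\mathbb Z\}$ and the same arrows with $n$ read modulo $d'm$. Exchange matrix: $\varepsilon_{uv}=\#\{u\to v\}-\#\{v\to u\}$. Cycles: for each $i$ the arrows $v^i_n\to v^i_{n+d_i}$ of $Q_m(\mathfrak g)$ form $d_i/d$ disjoint oriented cycles $P_{i,1},\dots,P_{i,d_i/d}$ (the cycle through $v^i_n$ consists of the $v^i_{n+kd_i}$, $k\in\mathbb Z$). Mutation of a seed (quiver with exchange matrix $\varepsilon$, variables $X_v$, $A_v$) at $k$: $\varepsilon'_{ij}=-\varepsilon_{ij}$ if $k\in\{i,j\}$, else $\varepsilon_{ij}+(|\varepsilon_{ik}|\varepsilon_{kj}+\varepsilon_{ik}|\varepsilon_{kj}|)/2$; $X'_k=X_k^{-1}$, $X'_i=X_i(1+X_k^{-\mathrm{sgn}(\varepsilon_{ik})})^{-\varepsilon_{ik}}$; $A'_k=A_k^{-1}(\prod_{\varepsilon_{kj}>0}A_j^{\varepsilon_{kj}}+\prod_{\varepsilon_{kj}<0}A_j^{-\varepsilon_{kj}})$, $A'_i=A_i$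 ($i\neq k$). For an oriented cycle $P: v_1\to\cdots\to v_p\to v_1$, $M(P)=\mu_{v_{p-2}}\cdots\mu_{v_1}$ and $R(P)=M(P)^{-1}\circ(v_{p-1},v_p)\circ\mu_{v_p}\mu_{v_{p-1}}\circ M(P)$ with $(v_{p-1},v_p)$ the transposition of vertex labels; $R(P_{i,\gamma})$ preserves $Q_m(\mathfrak g)$, and $R_i:=R(P_{i,1})\circ\cdots\circ R(P_{i,d_i/d})$. The cluster modular group $\Gamma_Q$ is the group of mutation sequences (with permutations) preserving $Q$, modulo those preserving the seed. The action $R_i^\ast$ on $\mathbb C(\mathbf A)$ expresses the $A$-variables of the transformed seed in terms of the initial ones. *)

theory Defs
  imports Complex_Main
begin

datatype lie_type = TA nat | TB nat | TC nat | TD nat | TE nat | TF4 | TG2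

fun valid_type :: "lie_type \<Rightarrow> bool" where
  "valid_type (TA l) = (l \<ge> 1)"
| "valid_type (TB l) = (l \<ge> 2)"
| "valid_type (TC l) = (l \<ge> 2)"
| "valid_type (TD l) = (l \<ge> 4)"
| "valid_type (TE l) = (l \<in> {6,7,8})"
| "valid_type TF4 = True"
| "valid_type TG2 = True"

fun rank :: "lie_type \<Rightarrow> int" where
  "rank (TA l) = int l" | "rank (TB l) = int l" | "rank (TC l) = int l"
| "rank (TD l) = int l" | "rank (TE l) = int l" | "rank TF4 = 4" | "rank TG2 = 2"

text \<open>Time indices n \<in> d Z / d' m Z are encoded as t \<in> {0..<N} with n = d*t,
  where N = d' m / d.\<close>
fun ratio :: "lie_type \<Rightarrow> int" where
  "ratio (TB l) = 2" | "ratio (TC l) = 2" | "ratio TF4 = 2" | "ratio TG2 = 3"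
| "ratio _ = 1"

definition nsteps :: "lie_type \<Rightarrow> nat \<Rightarrow> int" where
  "nsteps g m = ratio g * int m"

text \<open>d_i / d, the step (in units of d) of the cycles through the vertices v^i.\<close>
fun cstep :: "lie_type \<Rightarrow> int \<Rightarrow> int" where
  "cstep (TB l) i = (if i \<le> int l - 1 then 2 else 1)"
| "cstep (TC l) i = (if i = int l then 2 else 1)"
| "cstep TF4 i = (if i \<in> {1,2} then 2 else 1)"
| "cstep TG2 i = (if i = 2 then 3 else 1)"
| "cstep _ i = 1"

text \<open>Arrows of C(g) for simply-laced types (oriented from larger to smaller label).\<close>
fun dynkin_arrows :: "lie_type \<Rightarrow> (int \<times> int) list" where
  "dynkin_arrows (TA l) = [(k+1, k). k \<leftarrow> [1..int l - 1]]"
| "dynkin_arrows (TD l) = [(k+1, k). k \<leftarrow> [1..int l - 2]] @ [(int l, int l - 2)]"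
| "dynkin_arrows (TE l) = [(2,1),(3,2),(5,3),(4,3)] @ [(k+1, k). k \<leftarrow> [5..int l - 1]]"
| "dynkin_arrows _ = []"

text \<open>Arrow families: (i,a,j,b) stands for the arrows v^i_{t+a} \<rightarrow> v^j_{t+b},
  one for every t (indices modulo N, shifts in units of d).\<close>
fun arrow_families :: "lie_type \<Rightarrow> (int \<times> int \<times> int \<times> int) list" where
  "arrow_families (TB l) =
     [(i,0,i,2). i \<leftarrow> [1..int l - 1]]
     @ concat [[(i,0,i-1,0),(i-1,2,i,0)]. i \<leftarrow> [2..int l - 1]]
     @ [(int l,0,int l,1),(int l,0,int l - 1,-1),(int l - 1,1,int l,0)]"
| "arrow_families (TC l) =
     [(i,0,i,1). i \<leftarrow> [1..int l - 1]]
     @ concat [[(i,0,i-1,0),(i-1,1,i,0)]. i \<leftarrow> [2..int l - 1]]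
     @ [(int l,0,int l,2),(int l,0,int l - 1,0),(int l - 1,2,int l,0)]"
| "arrow_families TF4 =
     [(1,0,1,2),(2,0,2,2),(2,0,1,0),(1,2,2,0),
      (3,0,3,1),(3,0,2,-1),(2,1,3,0),
      (4,0,4,1),(4,0,3,0),(3,1,4,0)]"
| "arrow_families TG2 = [(1,0,1,1),(2,0,2,3),(2,0,1,0),(1,3,2,0)]"
| "arrow_families g =
     [(i,0,i,1). i \<leftarrow> [1..rank g]]
     @ concat [[(i,0,j,0),(j,1,i,0)]. (i,j) \<leftarrow> dynkin_arrows g]"

type_synonym vertex = "int \<times> int"

definition Qverts :: "lie_type \<Rightarrow> nat \<Rightarrow> vertex set" where
  "Qverts g m = {(i,t). 1 \<le> i \<and> i \<le> rank g \<and> 0 \<le> t \<and> t < nsteps g m}"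

text \<open>Exchange matrix: (number of arrows u \<rightarrow> v) - (number of arrows v \<rightarrow> u).\<close>
definition Qeps :: "lie_type \<Rightarrow> nat \<Rightarrow> vertex \<Rightarrow> vertex \<Rightarrow> int" where
  "Qeps g m u v =
     (\<Sum>t\<in>{0..<nsteps g m}. sum_list
        (map (\<lambda>(i,a,j,b).
              (if (i, (t+a) mod nsteps g m) = u \<and> (j, (t+b) mod nsteps g m) = v then 1 else 0)
            - (if (i, (t+a) mod nsteps g m) = v \<and> (j, (t+b) mod nsteps g m) = u then 1 else 0))
          (arrow_families g)))"

type_synonym seed = "(vertex \<Rightarrow> vertex \<Rightarrow> int) \<times> (vertex \<Rightarrow> complex)"

definition mut_eps :: "(vertex \<Rightarrow> vertex \<Rightarrow> int) \<Rightarrow> vertex \<Rightarrow> vertex \<Rightarrow> vertex \<Rightarrow> int" where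
  "mut_eps e k i j =
     (if k = i \<or> k = j then - e i j
      else e i j + (\<bar>e i k\<bar> * e k j + e i k * \<bar>e k j\<bar>) div 2)"

definition mut_A :: "vertex set \<Rightarrow> (vertex \<Rightarrow> vertex \<Rightarrow> int) \<Rightarrow> vertex \<Rightarrow> (vertex \<Rightarrow> complex)
    \<Rightarrow> (vertex \<Rightarrow> complex)" where
  "mut_A V e k A = A(k := inverse (A k) *
     ((\<Prod>j\<in>{j\<in>V. e k j > 0}. A j ^ nat (e k j))
      + (\<Prod>j\<in>{j\<in>V. e k j < 0}. A j ^ nat (- e k j))))"

definition transp :: "vertex \<Rightarrow> vertex \<Rightarrow> vertex \<Rightarrow> vertex" where
  "transp a b x = (if x = a then b else if x = b then a else x)"

datatype step = Mut vertex | Swap vertex vertex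

fun apply_step :: "vertex set \<Rightarrow> step \<Rightarrow> seed \<Rightarrow> seed" where
  "apply_step V (Mut k) (e, A) = (mut_eps e k, mut_A V e k A)"
| "apply_step V (Swap a b) (e, A) =
     ((\<lambda>x y. e (transp a b x) (transp a b y)), (\<lambda>x. A (transp a b x)))"

fun trace :: "vertex set \<Rightarrow> step list \<Rightarrow> seed \<Rightarrow> seed list" where
  "trace V [] s = [s]"
| "trace V (x # xs) s = s # trace V xs (apply_step V x s)"

text \<open>The oriented cycle P_{i,\<gamma>+1} (\<gamma> = 0,...,d_i/d - 1) of arrows v^i_n \<rightarrow> v^i_{n+d_i},
  listed starting from v^i_{\<gamma> d}.\<close>
definition cycle_verts :: "lie_type \<Rightarrow> nat \<Rightarrow> int \<Rightarrow> int \<Rightarrow> vertex list" where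
  "cycle_verts g m i \<gamma> =
     map (\<lambda>k. (i, (\<gamma> + int k * cstep g i) mod nsteps g m))
         [0..<nat (nsteps g m div cstep g i)]"

text \<open>R(P) = M(P)^{-1} \<circ> (v_{p-1},v_p) \<circ> \<mu>_{v_p} \<mu>_{v_{p-1}} \<circ> M(P), M(P) = \<mu>_{v_{p-2}} ... \<mu>_{v_1};
  as a list of steps, the first element is applied first.\<close>
definition R_seq :: "vertex list \<Rightarrow> step list" where
  "R_seq vs =
     (let p = length vs; M = map Mut (take (p - 2) vs) in
      M @ [Mut (vs ! (p - 2)), Mut (vs ! (p - 1)), Swap (vs ! (p - 2)) (vs ! (p - 1))] @ rev M)"

text \<open>R_i = R(P_{i,1}) \<circ> ... \<circ> R(P_{i,d_i/d}): R(P_{i,d_i/d}) is applied first.\<close>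
definition Ri_seq :: "lie_type \<Rightarrow> nat \<Rightarrow> int \<Rightarrow> step list" where
  "Ri_seq g m i = concat (map (\<lambda>\<gamma>. R_seq (cycle_verts g m i \<gamma>)) (rev [0..cstep g i - 1]))"

definition pstar :: "lie_type \<Rightarrow> nat \<Rightarrow> (vertex \<Rightarrow> complex) \<Rightarrow> vertex \<Rightarrow> complex" where
  "pstar g m A u = (\<Prod>w\<in>Qverts g m. A w powi Qeps g m u w)"

end

theory Submission
  imports Defs
begin

text \<open>
  Let P = (v_0 \<rightarrow> ... \<rightarrow> v_(p-1) \<rightarrow> v_0) be an oriented cycle which is a full subquiver and
  is balanced: every vertex outside P receives as many arrows from P as it sends to it.
  Mutating at v_0, ..., v_(p-3) keeps P in a fixed combinatorial shape in which v_(p-2) and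
  v_(p-1) end up with opposite rows. Mutating at both and swapping them then restores the
  exchange matrix and multiplies A at v_(p-2) and v_(p-1) by one factor \<kappa>. Undoing the first
  mutations spreads this factor over all of P, because the vertex being unmutated has exactly
  one in- and one out-neighbour among the rescaled vertices, each joined by a single arrow.
  So R(P) fixes \<epsilon> and rescales A on P by \<kappa>.

  In Q_m(g) each cycle P_(i,\<gamma>) is balanced, since the arrow families between different rows
  come in opposite pairs whose time shifts are compatible with d_i. As \<epsilon> is skew, also
  \<Sum>_(w\<in>P) \<epsilon>_(u,w) = 0 for every u, so the monomial p*(X_u) does not see the rescaling.
\<close>

section \<open>Sequences of mutations\<close>

definition apply_steps :: "vertex set \<Rightarrow> step list \<Rightarrow> seed \<Rightarrow> seed" where
  "apply_steps V xs s = foldl (\<lambda>s x. apply_step V x s) s xs"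

lemma apply_steps_Nil [simp]: "apply_steps V [] s = s"
  by (simp add: apply_steps_def)

lemma apply_steps_Cons [simp]: "apply_steps V (x # xs) s = apply_steps V xs (apply_step V x s)"
  by (simp add: apply_steps_def)

lemma apply_steps_append [simp]:
  "apply_steps V (xs @ ys) s = apply_steps V ys (apply_steps V xs s)"
  by (simp add: apply_steps_def)

lemma fst_apply_steps_Mut: "fst (apply_steps V (map Mut ks) (e, A)) = foldl mut_eps e ks"
  by (induction ks arbitrary: e A) simp_all

lemma trace_not_Nil [simp]: "trace V xs s \<noteq> []"
  by (cases xs) simp_all

lemma last_trace: "last (trace V xs s) = apply_steps V xs s"
  by (induction xs arbitrary: s) (simp_all del: apply_step.simps)

lemma start_in_trace: "s \<in> set (trace V xs s)"
  by (cases xs) simp_all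

lemma set_trace_append:
  "set (trace V (xs @ ys) s) = set (trace V xs s) \<union> set (trace V ys (apply_steps V xs s))"
  by (induction xs arbitrary: s) (auto simp: start_in_trace simp del: apply_step.simps)

lemma apply_steps_take_in_trace:
  assumes "j \<le> length xs"
  shows "apply_steps V (take j xs) s \<in> set (trace V xs s)"
proof -
  have "apply_steps V (take j xs) s \<in> set (trace V (drop j xs) (apply_steps V (take j xs) s))"
    by (rule start_in_trace)
  then show ?thesis
    using set_trace_append[of V "take j xs" "drop j xs" s] by simp
qed

definition nonvanishing_along :: "vertex set \<Rightarrow> step list \<Rightarrow> seed \<Rightarrow> bool" where
  "nonvanishing_along V xs s \<longleftrightarrow> (\<forall>s'\<in>set (trace V xs s). \<forall>v\<in>V. snd s' v \<noteq> 0)"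

lemma nonvanishing_along_append:
  "nonvanishing_along V (xs @ ys) s \<longleftrightarrow>
     nonvanishing_along V xs s \<and> nonvanishing_along V ys (apply_steps V xs s)"
  unfolding nonvanishing_along_def set_trace_append by blast

lemma nonvanishing_along_take:
  assumes "nonvanishing_along V xs s" "j \<le> length xs" "v \<in> V"
  shows "snd (apply_steps V (take j xs) s) v \<noteq> 0"
  using assms apply_steps_take_in_trace[of j xs V s] unfolding nonvanishing_along_def by blast

section \<open>Mutation\<close>

definition skew :: "('a \<Rightarrow> 'a \<Rightarrow> int) \<Rightarrow> bool" where
  "skew e \<longleftrightarrow> (\<forall>x y. e x y = - e y x)"

lemma skew_diag: "skew e \<Longrightarrow> e x x = 0"
  unfolding skew_def by (metis neg_equal_zero)

lemma even_abs_mult_add_mult_abs: "even (\<bar>a\<bar> * b + a * \<bar>b\<bar> :: int)"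
  by (cases "a \<ge> 0"; cases "b \<ge> 0") auto

lemma div_2_uminus_even: "even (x :: int) \<Longrightarrow> (- x) div 2 = - (x div 2)"
  by (elim evenE) simp

lemma mut_eps_mut_eps [simp]: "mut_eps (mut_eps e k) k = e"
proof (intro ext)
  fix i j
  define X where "X = \<bar>e i k\<bar> * e k j + e i k * \<bar>e k j\<bar>"
  have "(\<bar>- e i k\<bar> * - e k j + - e i k * \<bar>- e k j\<bar>) div 2 = - (X div 2)"
    using div_2_uminus_even[OF even_abs_mult_add_mult_abs] by (simp add: X_def)
  then show "mut_eps (mut_eps e k) k i j = e i j"
    by (simp add: mut_eps_def X_def)
qed

lemma skew_mut_eps:
  assumes "skew e"
  shows "skew (mut_eps e k)"
  unfolding skew_def
proof (intro allI)
  fix x y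
  have s: "\<And>x y. e x y = - e y x" using assms unfolding skew_def by blast
  define X where "X = \<bar>e x k\<bar> * e k y + e x k * \<bar>e k y\<bar>"
  have "\<bar>e y k\<bar> * e k x + e y k * \<bar>e k x\<bar> = - X"
    unfolding X_def using s[of y k] s[of k x] s[of x k] s[of k y] by (simp add: algebra_simps)
  then have "(\<bar>e y k\<bar> * e k x + e y k * \<bar>e k x\<bar>) div 2 = - (X div 2)"
    using div_2_uminus_even[OF even_abs_mult_add_mult_abs] by (simp add: X_def)
  then show "mut_eps e k x y = - mut_eps e k y x"
    using s[of x y] by (auto simp: mut_eps_def X_def)
qed

definition exchange_binomial ::
    "vertex set \<Rightarrow> (vertex \<Rightarrow> vertex \<Rightarrow> int) \<Rightarrow> vertex \<Rightarrow> (vertex \<Rightarrow> complex) \<Rightarrow> complex" where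
  "exchange_binomial V e k A = (\<Prod>j\<in>{j\<in>V. e k j > 0}. A j ^ nat (e k j))
      + (\<Prod>j\<in>{j\<in>V. e k j < 0}. A j ^ nat (- e k j))"

lemma mut_A_same: "mut_A V e k A k = inverse (A k) * exchange_binomial V e k A"
  by (simp add: mut_A_def exchange_binomial_def)

lemma mut_A_other [simp]: "x \<noteq> k \<Longrightarrow> mut_A V e k A x = A x"
  by (simp add: mut_A_def)

lemma exchange_binomial_cong:
  assumes "\<And>j. j \<in> V \<Longrightarrow> e' k' j = e k j" "\<And>j. j \<in> V \<Longrightarrow> e k j \<noteq> 0 \<Longrightarrow> A' j = A j"
  shows "exchange_binomial V e' k' A' = exchange_binomial V e k A"
proof -
  have "{j\<in>V. e' k' j > 0} = {j\<in>V. e k j > 0}" "{j\<in>V. e' k' j < 0} = {j\<in>V. e k j < 0}"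
    using assms(1) by auto
  moreover have "(\<Prod>j\<in>{j\<in>V. e k j > 0}. A' j ^ nat (e' k' j)) = (\<Prod>j\<in>{j\<in>V. e k j > 0}. A j ^ nat (e k j))"
    "(\<Prod>j\<in>{j\<in>V. e k j < 0}. A' j ^ nat (- e' k' j)) = (\<Prod>j\<in>{j\<in>V. e k j < 0}. A j ^ nat (- e k j))"
    using assms by (auto intro: prod.cong)
  ultimately show ?thesis
    unfolding exchange_binomial_def by simp
qed

lemma exchange_binomial_uminus:
  "exchange_binomial V (\<lambda>_ j. - e k j) k' A = exchange_binomial V e k A"
proof -
  have "{j\<in>V. - e k j > 0} = {j\<in>V. e k j < 0}" "{j\<in>V. - e k j < 0} = {j\<in>V. e k j > 0}"
    by auto
  then show ?thesis by (simp add: exchange_binomial_def add.commute)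
qed

lemma exchange_binomial_mut:
  assumes "e k k = 0"
  shows "exchange_binomial V (mut_eps e k) k (mut_A V e k A) = exchange_binomial V e k A"
proof -
  have "mut_A V e k A j = A j" if "e k j \<noteq> 0" for j
    using that assms by (cases "j = k") simp_all
  then have "exchange_binomial V (mut_eps e k) k (mut_A V e k A)
      = exchange_binomial V (\<lambda>_ j. - e k j) k A"
    by (intro exchange_binomial_cong) (simp_all add: mut_eps_def)
  then show ?thesis by (simp add: exchange_binomial_uminus)
qed

lemma mut_A_mut_A:
  assumes "e k k = 0" "A k \<noteq> 0" "mut_A V e k A k \<noteq> 0"
  shows "mut_A V (mut_eps e k) k (mut_A V e k A) = A"
proof (intro ext)
  fix x
  have "exchange_binomial V e k A \<noteq> 0" using assms(3) by (simp add: mut_A_same)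
  then show "mut_A V (mut_eps e k) k (mut_A V e k A) x = A x"
    using assms(2) by (cases "x = k") (simp_all add: mut_A_same exchange_binomial_mut[of e k, OF assms(1)])
qed

definition scale_on :: "vertex set \<Rightarrow> complex \<Rightarrow> (vertex \<Rightarrow> complex) \<Rightarrow> (vertex \<Rightarrow> complex)" where
  "scale_on S c A = (\<lambda>x. if x \<in> S then c * A x else A x)"

lemma prod_power_scale_on:
  assumes "finite P" "P \<inter> S = {y}" "n y = 1"
  shows "(\<Prod>j\<in>P. scale_on S c A j ^ n j) = c * (\<Prod>j\<in>P. A j ^ n j)"
proof -
  have "(\<Prod>j\<in>P. scale_on S c A j ^ n j)
      = (\<Prod>j\<in>P. (if j \<in> S then c ^ n j else 1) * A j ^ n j)"
    by (rule prod.cong) (auto simp: scale_on_def power_mult_distrib)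
  also have "\<dots> = (\<Prod>j\<in>P \<inter> S. c ^ n j) * (\<Prod>j\<in>P. A j ^ n j)"
    using assms(1) by (simp add: prod.distrib prod.If_cases)
  finally show ?thesis using assms(2,3) by simp
qed

text \<open>Under these hypotheses the exchange binomial at k is homogeneous of degree one in the
  variables on S.\<close>
lemma mut_A_scale_on:
  assumes "finite V" "k \<notin> S"
    and "{j\<in>V. e k j > 0} \<inter> S = {y_pos}" "e k y_pos = 1"
    and "{j\<in>V. e k j < 0} \<inter> S = {y_neg}" "e k y_neg = -1"
  shows "mut_A V e k (scale_on S c A) = scale_on (insert k S) c (mut_A V e k A)"
proof (intro ext)
  fix x
  have "exchange_binomial V e k (scale_on S c A) = c * exchange_binomial V e k A"
    unfolding exchange_binomial_def
    using prod_power_scale_on[of "{j\<in>V. e k j > 0}" S y_pos "\<lambda>j. nat (e k j)" c A]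
      prod_power_scale_on[of "{j\<in>V. e k j < 0}" S y_neg "\<lambda>j. nat (- e k j)" c A] assms
    by (simp add: distrib_left)
  then show "mut_A V e k (scale_on S c A) x = scale_on (insert k S) c (mut_A V e k A) x"
    using assms(2) by (cases "x = k") (simp_all add: mut_A_same scale_on_def)
qed

section \<open>Mutating at two vertices with opposite rows\<close>

lemma mut_eps_keeps_isolated_row:
  assumes "z \<noteq> k" "e k z = 0" "e z k = 0"
  shows "mut_eps e k z y = e z y"
  using assms by (auto simp: mut_eps_def)

lemma mut_eps_keeps_isolated_col:
  assumes "z \<noteq> k" "e k z = 0" "e z k = 0"
  shows "mut_eps e k x z = e x z"
  using assms by (auto simp: mut_eps_def)

lemma mut_eps_opposite_rows:
  assumes skew: "skew E" and "a \<noteq> b" and row: "\<And>y. E a y = - E b y"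
  shows "mut_eps (mut_eps E a) b x y = E (transp a b x) (transp a b y)"
proof -
  have s: "\<And>x y. E x y = - E y x" using skew unfolding skew_def by blast
  have col: "\<And>x. E x a = - E x b" using s row by metis
  have diag: "E a a = 0" "E b b = 0" using skew_diag[OF skew] by blast+
  have off: "E a b = 0" "E b a = 0" using row[of b] diag s[of a b] by simp_all
  define E1 where "E1 = mut_eps E a"
  have E1_row_b: "E1 b y = E b y" and E1_col_b: "E1 x b = E x b" for x y
    unfolding E1_def using mut_eps_keeps_isolated_row[of b a E] mut_eps_keeps_isolated_col[of b a E] \<open>a \<noteq> b\<close> off
    by simp_all
  show ?thesis
  proof (cases "x \<in> {a, b} \<or> y \<in> {a, b}")
    case True
    have E1_a: "E1 a y = - E a y" "E1 x a = - E x a" for x y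
      by (simp_all add: E1_def mut_eps_def)
    show ?thesis
      using True \<open>a \<noteq> b\<close> diag off
      by (cases "x = a"; cases "x = b"; cases "y = a"; cases "y = b")
        (simp_all add: mut_eps_def transp_def E1_def[symmetric] row col E1_row_b E1_col_b E1_a)
  next
    case False
    define X where "X = \<bar>E x a\<bar> * E a y + E x a * \<bar>E a y\<bar>"
    have "\<bar>E x b\<bar> * E b y + E x b * \<bar>E b y\<bar> = - X"
      unfolding X_def using col[of x] row[of y] by (simp add: algebra_simps)
    then have "mut_eps E1 b x y = E1 x y - X div 2"
      using False div_2_uminus_even[OF even_abs_mult_add_mult_abs]
      by (auto simp: mut_eps_def E1_row_b E1_col_b X_def)
    also have "E1 x y = E x y + X div 2"
      using False by (auto simp: E1_def mut_eps_def X_def)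
    finally show ?thesis using False by (simp add: E1_def transp_def)
  qed
qed

lemma mut_A_opposite_rows:
  assumes skew: "skew E" and "a \<noteq> b" and row: "\<And>y. E a y = - E b y"
    and "B a \<noteq> 0" "B b \<noteq> 0"
  shows "mut_A V (mut_eps E a) b (mut_A V E a B) (transp a b x)
       = scale_on {a, b} (exchange_binomial V E a B / (B a * B b)) B x"
proof -
  have "E b a = 0" using row[of a] skew_diag[OF skew, of a] by simp
  have "exchange_binomial V (mut_eps E a) b (mut_A V E a B) = exchange_binomial V (\<lambda>_ j. - E a j) a B"
  proof (rule exchange_binomial_cong)
    show "mut_eps E a b j = - E a j" for j
      using \<open>a \<noteq> b\<close> \<open>E b a = 0\<close> row[of j] by (auto simp: mut_eps_def)
    show "mut_A V E a B j = B j" if "- E a j \<noteq> 0" for j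
      using that \<open>E b a = 0\<close> row[of a] by (cases "j = a") simp_all
  qed
  then have "exchange_binomial V (mut_eps E a) b (mut_A V E a B) = exchange_binomial V E a B"
    by (simp add: exchange_binomial_uminus)
  then show ?thesis
    using \<open>a \<noteq> b\<close> assms(4,5)
    by (auto simp: transp_def scale_on_def mut_A_same field_simps)
qed

lemma apply_steps_opposite_rows:
  assumes "skew E" "a \<noteq> b" "\<And>y. E a y = - E b y" "B a \<noteq> 0" "B b \<noteq> 0"
  shows "apply_steps V [Mut a, Mut b, Swap a b] (E, B)
       = (E, scale_on {a, b} (exchange_binomial V E a B / (B a * B b)) B)"
  using mut_eps_opposite_rows[OF assms(1-3)] mut_A_opposite_rows[OF assms]
    transp_def
  by (simp add: fun_eq_iff)

section \<open>The transformation R(P) of a balanced cycle\<close>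

lemma set_drop_eq_nth_image: "set (drop n xs) = (!) xs ` {n..<length xs}"
proof (intro set_eqI iffI)
  fix y assume "y \<in> set (drop n xs)"
  then obtain i where "i < length xs - n" "y = xs ! (n + i)" by (auto simp: in_set_conv_nth)
  then show "y \<in> (!) xs ` {n..<length xs}" by force
next
  fix y assume "y \<in> (!) xs ` {n..<length xs}"
  then obtain c where c: "n \<le> c" "c < length xs" "y = xs ! c" by auto
  then have "y = drop n xs ! (c - n)" by simp
  then show "y \<in> set (drop n xs)" using c by (metis diff_less_mono length_drop nth_mem)
qed

lemma sum_add_two_deltas:
  fixes X :: "nat \<Rightarrow> int"
  assumes "finite I" "u \<in> I" "v \<in> I" "u \<noteq> v"
  shows "(\<Sum>k\<in>I. X k + (if k = u then \<alpha> else if k = v then \<beta> else 0)) = (\<Sum>k\<in>I. X k) + \<alpha> + \<beta>"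
proof -
  have "(\<Sum>k\<in>I. X k + (if k = u then \<alpha> else if k = v then \<beta> else 0))
      = (\<Sum>k\<in>I. X k) + (\<Sum>k\<in>I. if k = u then \<alpha> else 0) + (\<Sum>k\<in>I. if k = v then \<beta> else 0)"
    unfolding sum.distrib[symmetric] using assms(4) by (intro sum.cong) auto
  then show ?thesis using assms by simp
qed

lemma neg_part_add_pos_part: "((c::int) - \<bar>c\<bar>) div 2 + (c + \<bar>c\<bar>) div 2 = c"
  by (cases "c \<ge> 0") auto

lemma skew_foldl_mut_eps: "skew e \<Longrightarrow> skew (foldl mut_eps e ks)"
  by (induction ks arbitrary: e) (simp_all add: skew_mut_eps)

text \<open>The quiver on the cycle v_0 \<rightarrow> v_1 \<rightarrow> ... \<rightarrow> v_(p-1) \<rightarrow> v_0 after mutating at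
  v_0, ..., v_(j-1), for j \<le> p - 2: the path v_0 \<rightarrow> ... \<rightarrow> v_(j-1), the triangle
  v_(j-1) \<rightarrow> v_(p-1) \<rightarrow> v_j \<rightarrow> v_(j-1) and the path v_j \<rightarrow> ... \<rightarrow> v_(p-1).\<close>
definition cyc_arrow :: "nat \<Rightarrow> nat \<Rightarrow> nat \<Rightarrow> nat \<Rightarrow> bool" where
  "cyc_arrow p j a b \<longleftrightarrow> (a + 1 = b \<and> b + 1 \<le> j) \<or> (a = j \<and> b + 1 = j) \<or> (a + 1 = j \<and> b + 1 = p)
     \<or> (a + 1 = p \<and> b = j) \<or> (j \<le> a \<and> a + 1 = b \<and> b + 1 \<le> p)"

definition cyc_eps :: "nat \<Rightarrow> nat \<Rightarrow> nat \<Rightarrow> nat \<Rightarrow> int" where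
  "cyc_eps p j a b = (if cyc_arrow p j a b then 1 else 0) - (if cyc_arrow p j b a then 1 else 0)"

lemma cyc_eps_0:
  "a < p \<Longrightarrow> b < p \<Longrightarrow>
     cyc_eps p 0 a b = (if b = Suc a mod p then 1 else 0) - (if a = Suc b mod p then 1 else 0)"
  unfolding cyc_eps_def cyc_arrow_def by (cases "a + 1 = p"; cases "b + 1 = p") auto

lemma cyc_eps_row:
  "j + 3 \<le> p \<Longrightarrow> b < p \<Longrightarrow>
     cyc_eps p j j b = (if b + 1 = j \<or> b = j + 1 then 1 else 0) - (if b + 1 = p then 1 else 0)"
  unfolding cyc_eps_def cyc_arrow_def by auto

lemma cyc_eps_col:
  "j + 3 \<le> p \<Longrightarrow> a < p \<Longrightarrow>
     cyc_eps p j a j = (if a + 1 = p then 1 else 0) - (if a + 1 = j \<or> a = j + 1 then 1 else 0)"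
  unfolding cyc_eps_def cyc_arrow_def by auto

lemma cyc_eps_last_rows:
  "2 \<le> p \<Longrightarrow> b < p \<Longrightarrow> cyc_eps p (p - 2) (p - 2) b = - cyc_eps p (p - 2) (p - 1) b"
  unfolding cyc_eps_def cyc_arrow_def by auto

lemma cyc_eps_Suc_flip:
  assumes "j + 3 \<le> p" "a < p" "b < p" "a = j \<or> b = j"
  shows "cyc_eps p (Suc j) a b = - cyc_eps p j a b"
proof -
  have "cyc_arrow p (Suc j) j c \<longleftrightarrow> cyc_arrow p j c j" "cyc_arrow p (Suc j) c j \<longleftrightarrow> cyc_arrow p j j c"
    if "c < p" for c
    using assms(1) that unfolding cyc_arrow_def by auto
  then show ?thesis using assms(2-4) unfolding cyc_eps_def by auto
qed

lemma cyc_eps_Suc_other: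
  assumes "j + 3 \<le> p" "a \<noteq> j" "b \<noteq> j"
  shows "cyc_eps p (Suc j) a b = cyc_eps p j a b
     + (if a + 1 = p \<and> (b + 1 = j \<or> b = j + 1) then 1 else 0)
     - (if (a + 1 = j \<or> a = j + 1) \<and> b + 1 = p then 1 else 0)"
proof -
  have Suc_arrow: "cyc_arrow p (Suc j) x y \<longleftrightarrow>
      (cyc_arrow p j x y \<and> \<not> (x + 1 = j \<and> y + 1 = p)) \<or> (x + 1 = p \<and> y = j + 1)"
    if "x \<noteq> j" "y \<noteq> j" for x y
    using that unfolding cyc_arrow_def by auto
  define P Q where "P \<longleftrightarrow> cyc_arrow p j a b" and "Q \<longleftrightarrow> cyc_arrow p j b a"
  define X Y X' Y' where "X \<longleftrightarrow> a + 1 = j \<and> b + 1 = p" and "Y \<longleftrightarrow> a + 1 = p \<and> b = j + 1"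
    and "X' \<longleftrightarrow> b + 1 = j \<and> a + 1 = p" and "Y' \<longleftrightarrow> b + 1 = p \<and> a = j + 1"
  have arrows: "X \<Longrightarrow> P \<and> \<not> Q" "X' \<Longrightarrow> Q \<and> \<not> P" "Y \<Longrightarrow> \<not> P" "Y' \<Longrightarrow> \<not> Q"
    using assms(1) unfolding P_def Q_def X_def Y_def X'_def Y'_def cyc_arrow_def by auto
  have exclusive: "\<not> (X \<and> Y)" "\<not> (X \<and> X')" "\<not> (X \<and> Y')" "\<not> (Y \<and> X')" "\<not> (Y \<and> Y')" "\<not> (X' \<and> Y')"
    using assms(1) unfolding X_def Y_def X'_def Y'_def by auto
  have Suc_eq: "cyc_eps p (Suc j) a b = (if (P \<and> \<not> X) \<or> Y then 1 else 0) - (if (Q \<and> \<not> X') \<or> Y' then 1 else 0)"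
    unfolding cyc_eps_def Suc_arrow[OF assms(2,3)] Suc_arrow[OF assms(3,2)]
    by (simp only: P_def Q_def X_def Y_def X'_def Y'_def)
  have eq: "cyc_eps p j a b = (if P then 1 else 0) - (if Q then 1 else 0)"
    by (simp only: cyc_eps_def P_def Q_def)
  have conds: "(a + 1 = p \<and> (b + 1 = j \<or> b = j + 1)) \<longleftrightarrow> X' \<or> Y"
    "((a + 1 = j \<or> a = j + 1) \<and> b + 1 = p) \<longleftrightarrow> X \<or> Y'"
    unfolding X_def Y_def X'_def Y'_def by auto
  show ?thesis
    unfolding Suc_eq eq conds using arrows exclusive by (cases P; cases Q) auto
qed

lemma mut_eps_correction_indicators:
  assumes "\<not> (U\<^sub>1 \<and> U\<^sub>2)" "\<not> (W\<^sub>1 \<and> W\<^sub>2)"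
  shows "(\<bar>(if U\<^sub>1 then 1 else 0) - (if U\<^sub>2 then 1 else 0)\<bar> * ((if W\<^sub>1 then 1 else 0) - (if W\<^sub>2 then 1 else 0))
     + ((if U\<^sub>1 then 1 else 0) - (if U\<^sub>2 then 1 else 0)) * \<bar>(if W\<^sub>1 then 1 else 0) - (if W\<^sub>2 then 1 else 0)\<bar>) div 2
   = (if U\<^sub>1 \<and> W\<^sub>1 then 1 else 0) - (if U\<^sub>2 \<and> W\<^sub>2 then 1 else (0::int))"
  using assms by (cases U\<^sub>1; cases U\<^sub>2; cases W\<^sub>1; cases W\<^sub>2) simp_all

locale balanced_cycle =
  fixes V :: "vertex set" and e :: "vertex \<Rightarrow> vertex \<Rightarrow> int" and vs :: "vertex list" and p :: nat
  assumes finite_V: "finite V" and set_vs: "set vs \<subseteq> V" and distinct_vs: "distinct vs"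
    and length_vs: "length vs = p" and two_le_p: "2 \<le> p" and skew_e: "skew e"
    and e_on_cycle: "\<And>a b. a < p \<Longrightarrow> b < p \<Longrightarrow>
       e (vs ! a) (vs ! b) = (if b = Suc a mod p then 1 else 0) - (if a = Suc b mod p then 1 else 0)"
    and e_balanced: "\<And>w. w \<notin> set vs \<Longrightarrow> (\<Sum>k\<in>{0..<p}. e (vs ! k) w) = 0"
begin

definition mutated_eps :: "nat \<Rightarrow> vertex \<Rightarrow> vertex \<Rightarrow> int" where
  "mutated_eps j = foldl mut_eps e (take j vs)"

definition mutated_A :: "(vertex \<Rightarrow> complex) \<Rightarrow> nat \<Rightarrow> vertex \<Rightarrow> complex" where
  "mutated_A A j = snd (apply_steps V (map Mut (take j vs)) (e, A))"

lemma apply_steps_mutations: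
  "apply_steps V (map Mut (take j vs)) (e, A) = (mutated_eps j, mutated_A A j)"
  by (simp add: mutated_eps_def mutated_A_def prod_eq_iff fst_apply_steps_Mut)

lemma mutated_0: "mutated_eps 0 = e" "mutated_A A 0 = A"
  by (simp_all add: mutated_eps_def mutated_A_def)

lemma mutated_Suc:
  assumes "j < p"
  shows "mutated_eps (Suc j) = mut_eps (mutated_eps j) (vs ! j)"
    and "mutated_A A (Suc j) = mut_A V (mutated_eps j) (vs ! j) (mutated_A A j)"
proof -
  have "apply_steps V (map Mut (take (Suc j) vs)) (e, A)
      = apply_step V (Mut (vs ! j)) (mutated_eps j, mutated_A A j)"
    using assms length_vs
    by (simp add: take_Suc_conv_app_nth apply_steps_mutations del: apply_step.simps)
  then show "mutated_eps (Suc j) = mut_eps (mutated_eps j) (vs ! j)"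
    and "mutated_A A (Suc j) = mut_A V (mutated_eps j) (vs ! j) (mutated_A A j)"
    by (simp_all add: apply_steps_mutations)
qed

lemma skew_mutated_eps: "skew (mutated_eps j)"
  unfolding mutated_eps_def by (rule skew_foldl_mut_eps[OF skew_e])

lemma nth_vs_eq_iff: "c < p \<Longrightarrow> d < p \<Longrightarrow> vs ! c = vs ! d \<longleftrightarrow> c = d"
  using distinct_vs length_vs by (simp add: nth_eq_iff_index_eq)

lemma nth_vs_in_V: "c < p \<Longrightarrow> vs ! c \<in> V"
  using set_vs length_vs by auto

lemma mutated_eps_on_cycle:
  "j \<le> p - 2 \<Longrightarrow> a < p \<Longrightarrow> b < p \<Longrightarrow> mutated_eps j (vs ! a) (vs ! b) = cyc_eps p j a b"
proof (induction j arbitrary: a b)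
  case 0
  then show ?case by (simp add: mutated_0 e_on_cycle cyc_eps_0)
next
  case (Suc j)
  have j3: "j + 3 \<le> p" using Suc.prems two_le_p by simp
  have IH: "mutated_eps j (vs ! x) (vs ! y) = cyc_eps p j x y" if "x < p" "y < p" for x y
    using Suc.IH Suc.prems(1) that by simp
  have "j < p" using j3 by simp
  show ?case
  proof (cases "a = j \<or> b = j")
    case True
    then show ?thesis
      using Suc.prems IH[of a b] j3 \<open>j < p\<close>
      by (auto simp: mutated_Suc mut_eps_def cyc_eps_Suc_flip)
  next
    case False
    then have "vs ! j \<noteq> vs ! a" "vs ! j \<noteq> vs ! b"
      using nth_vs_eq_iff[of j a] nth_vs_eq_iff[of j b] Suc.prems \<open>j < p\<close> by auto
    moreover have "\<not> (a + 1 = p \<and> (a + 1 = j \<or> a = j + 1))" "\<not> ((b + 1 = j \<or> b = j + 1) \<and> b + 1 = p)"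
      using j3 by auto
    ultimately show ?thesis
      using False Suc.prems j3 \<open>j < p\<close>
      by (simp add: mutated_Suc mut_eps_def IH cyc_eps_row cyc_eps_col mut_eps_correction_indicators
          cyc_eps_Suc_other)
  qed
qed

lemma mutated_eps_balanced:
  "j \<le> p - 2 \<Longrightarrow> w \<notin> set vs \<Longrightarrow> (\<Sum>c\<in>{j..<p}. mutated_eps j (vs ! c) w) = 0"
proof (induction j)
  case 0
  then show ?case by (simp add: mutated_0 e_balanced)
next
  case (Suc j)
  have j3: "j + 3 \<le> p" using Suc.prems two_le_p by simp
  define E where "E = mutated_eps j"
  define x where "x = E (vs ! j) w"
  have "w \<noteq> vs ! j" using Suc.prems j3 length_vs by auto
  have entry: "mutated_eps (Suc j) (vs ! c) w = E (vs ! c) w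
      + (if c = j + 1 then (x - \<bar>x\<bar>) div 2 else if c = p - 1 then (x + \<bar>x\<bar>) div 2 else 0)"
    if c: "c \<in> {Suc j..<p}" for c
  proof -
    have "vs ! c \<noteq> vs ! j" using c j3 nth_vs_eq_iff[of c j] by auto
    moreover have "E (vs ! c) (vs ! j) = (if c + 1 = p then 1 else 0) - (if c = j + 1 then 1 else 0)"
      using c j3 mutated_eps_on_cycle[of j c j] cyc_eps_col[OF j3, of c] by (simp add: E_def)
    ultimately show ?thesis
      using c j3 \<open>w \<noteq> vs ! j\<close> by (auto simp: mutated_Suc mut_eps_def E_def[symmetric] x_def)
  qed
  have "(\<Sum>c\<in>{Suc j..<p}. mutated_eps (Suc j) (vs ! c) w)
      = (\<Sum>c\<in>{Suc j..<p}. E (vs ! c) w) + (x - \<bar>x\<bar>) div 2 + (x + \<bar>x\<bar>) div 2"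
    using j3 by (simp add: entry sum_add_two_deltas)
  also have "(\<Sum>c\<in>{Suc j..<p}. E (vs ! c) w) = - x"
  proof -
    have "{j..<p} = insert j {Suc j..<p}" using j3 by auto
    then show ?thesis using Suc by (simp add: E_def x_def)
  qed
  finally show ?case using neg_part_add_pos_part[of x] by linarith
qed

lemma mutated_eps_last_rows_opposite:
  "mutated_eps (p - 2) (vs ! (p - 2)) y = - mutated_eps (p - 2) (vs ! (p - 1)) y"
proof (cases "y \<in> set vs")
  case True
  then obtain c where "c < p" "y = vs ! c" using length_vs by (auto simp: in_set_conv_nth)
  then show ?thesis using two_le_p by (simp add: mutated_eps_on_cycle cyc_eps_last_rows)
next
  case False
  have "{p - 2..<p} = {p - 2, p - 1}" "p - 2 \<noteq> p - 1" using two_le_p by auto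
  then show ?thesis using mutated_eps_balanced[OF order_refl False] by simp
qed

lemma set_drop_vs: "set (drop n vs) = (!) vs ` {n..<p}"
  by (simp add: set_drop_eq_nth_image length_vs)

lemma mutated_eps_neighbours_in_tail:
  assumes "j + 3 \<le> p"
  shows "{y\<in>V. mutated_eps (Suc j) (vs ! j) y > 0} \<inter> set (drop (Suc j) vs) = {vs ! (p - 1)}"
    and "{y\<in>V. mutated_eps (Suc j) (vs ! j) y < 0} \<inter> set (drop (Suc j) vs) = {vs ! Suc j}"
    and "mutated_eps (Suc j) (vs ! j) (vs ! (p - 1)) = 1"
    and "mutated_eps (Suc j) (vs ! j) (vs ! Suc j) = -1"
proof -
  have row: "mutated_eps (Suc j) (vs ! j) (vs ! c) = (if c + 1 = p then 1 else 0) - (if c = j + 1 then 1 else 0)"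
    if "Suc j \<le> c" "c < p" for c
    using assms that mutated_eps_on_cycle[of "Suc j" j c] cyc_eps_Suc_flip[OF assms, of j c]
      cyc_eps_row[OF assms, of c] by simp
  show "mutated_eps (Suc j) (vs ! j) (vs ! (p - 1)) = 1"
    and "mutated_eps (Suc j) (vs ! j) (vs ! Suc j) = -1"
    using row[of "p - 1"] row[of "Suc j"] assms by simp_all
  show "{y\<in>V. mutated_eps (Suc j) (vs ! j) y > 0} \<inter> set (drop (Suc j) vs) = {vs ! (p - 1)}"
    and "{y\<in>V. mutated_eps (Suc j) (vs ! j) y < 0} \<inter> set (drop (Suc j) vs) = {vs ! Suc j}"
    using row assms nth_vs_in_V by (auto simp: set_drop_vs split: if_splits)
qed

lemma unmutate_rescaled:
  assumes "j \<le> p - 2" and nonzero: "\<And>i v. i \<le> j \<Longrightarrow> v \<in> V \<Longrightarrow> mutated_A A i v \<noteq> 0"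
  shows "apply_steps V (rev (map Mut (take j vs)))
           (mutated_eps j, scale_on (set (drop j vs)) \<kappa> (mutated_A A j))
         = (e, scale_on (set vs) \<kappa> A)"
  using assms
proof (induction j)
  case 0
  then show ?case by (simp add: mutated_0)
next
  case (Suc j)
  have j3: "j + 3 \<le> p" using Suc.prems(1) two_le_p by simp
  then have "j < p" by simp
  define k S where "k = vs ! j" and "S = set (drop (Suc j) vs)"
  have "k \<notin> S" using nth_vs_eq_iff \<open>j < p\<close> by (fastforce simp: k_def S_def set_drop_vs)
  have drop_j: "set (drop j vs) = insert k S"
    using \<open>j < p\<close> length_vs by (simp add: k_def S_def Cons_nth_drop_Suc[symmetric])
  have rev_take: "rev (map Mut (take (Suc j) vs)) = Mut k # rev (map Mut (take j vs))"
    using \<open>j < p\<close> length_vs by (simp add: take_Suc_conv_app_nth k_def)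
  have "mutated_A A j k \<noteq> 0" "mutated_A A (Suc j) k \<noteq> 0"
    using Suc.prems(2) nth_vs_in_V[OF \<open>j < p\<close>] by (simp_all add: k_def)
  then have undo: "mut_A V (mutated_eps (Suc j)) k (mutated_A A (Suc j)) = mutated_A A j"
    using skew_diag[OF skew_mutated_eps] \<open>j < p\<close>
    by (simp add: mutated_Suc k_def mut_A_mut_A)
  have "mut_A V (mutated_eps (Suc j)) k (scale_on S \<kappa> (mutated_A A (Suc j)))
      = scale_on (insert k S) \<kappa> (mutated_A A j)"
    using mut_A_scale_on[OF finite_V \<open>k \<notin> S\<close>] mutated_eps_neighbours_in_tail[OF j3] undo
    by (simp add: k_def S_def)
  moreover have "mut_eps (mutated_eps (Suc j)) k = mutated_eps j"
    using \<open>j < p\<close> by (simp add: mutated_Suc k_def)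
  ultimately show ?case
    using Suc by (simp add: rev_take drop_j S_def)
qed

lemma R_seq_eq:
  "R_seq vs = map Mut (take (p - 2) vs)
     @ [Mut (vs ! (p - 2)), Mut (vs ! (p - 1)), Swap (vs ! (p - 2)) (vs ! (p - 1))]
     @ rev (map Mut (take (p - 2) vs))"
proof -
  have "p - 1 = Suc (p - 2)" using two_le_p by simp
  then show ?thesis unfolding R_seq_def Let_def length_vs by simp
qed

lemma take_R_seq: "i \<le> p - 1 \<Longrightarrow> take i (R_seq vs) = map Mut (take i vs)"
proof -
  assume "i \<le> p - 1"
  have "p - 1 = Suc (p - 2)" "p - 2 < length vs" using two_le_p length_vs by simp_all
  then have "R_seq vs = map Mut (take (p - 1) vs)
      @ [Mut (vs ! (p - 1)), Swap (vs ! (p - 2)) (vs ! (p - 1))] @ rev (map Mut (take (p - 2) vs))"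
    by (simp add: R_seq_eq take_Suc_conv_app_nth)
  then show ?thesis using \<open>i \<le> p - 1\<close> length_vs two_le_p by (simp add: take_map min_def) arith
qed

lemma nonzero_mutated_A:
  assumes "nonvanishing_along V (R_seq vs) (e, A)" "i \<le> p - 1" "v \<in> V"
  shows "mutated_A A i v \<noteq> 0"
proof -
  have "i \<le> length (R_seq vs)" using assms(2) length_vs by (simp add: R_seq_eq)
  then have "snd (apply_steps V (take i (R_seq vs)) (e, A)) v \<noteq> 0"
    using nonvanishing_along_take[OF assms(1) _ assms(3)] by blast
  then show ?thesis by (simp add: take_R_seq[OF assms(2)] apply_steps_mutations)
qed

lemma R_seq_rescales_cycle:
  assumes "nonvanishing_along V (R_seq vs) (e, A)"
  obtains \<kappa> where "\<kappa> \<noteq> 0" "apply_steps V (R_seq vs) (e, A) = (e, scale_on (set vs) \<kappa> A)"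
proof -
  define M a b where "M = map Mut (take (p - 2) vs)" and "a = vs ! (p - 2)" and "b = vs ! (p - 1)"
  define E B where "E = mutated_eps (p - 2)" and "B = mutated_A A (p - 2)"
  define \<kappa> where "\<kappa> = exchange_binomial V E a B / (B a * B b)"
  have "a \<noteq> b" using nth_vs_eq_iff[of "p - 2" "p - 1"] two_le_p by (simp add: a_def b_def)
  have "a \<in> V" "b \<in> V" using nth_vs_in_V two_le_p by (simp_all add: a_def b_def)
  then have "B a \<noteq> 0" "B b \<noteq> 0" "mutated_A A (Suc (p - 2)) a \<noteq> 0"
    using nonzero_mutated_A[OF assms] two_le_p by (simp_all add: B_def)
  then have "\<kappa> \<noteq> 0"
    using two_le_p by (simp add: \<kappa>_def mutated_Suc mut_A_same E_def B_def a_def)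
  have "apply_steps V (M @ [Mut a, Mut b, Swap a b]) (e, A) = (E, scale_on {a, b} \<kappa> B)"
    using apply_steps_opposite_rows[OF skew_mutated_eps \<open>a \<noteq> b\<close> _ \<open>B a \<noteq> 0\<close> \<open>B b \<noteq> 0\<close>]
      mutated_eps_last_rows_opposite
    by (simp add: M_def apply_steps_mutations E_def B_def a_def b_def \<kappa>_def del: apply_step.simps)
  moreover have "{p - 2..<p} = {p - 2, p - 1}" using two_le_p by auto
  then have "set (drop (p - 2) vs) = {a, b}" by (simp add: set_drop_vs a_def b_def)
  ultimately have "apply_steps V (R_seq vs) (e, A) = (e, scale_on (set vs) \<kappa> A)"
    using unmutate_rescaled[OF order_refl, of A \<kappa>] nonzero_mutated_A[OF assms]
    by (simp add: R_seq_eq M_def a_def b_def E_def B_def del: apply_step.simps)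
  then show ?thesis using \<open>\<kappa> \<noteq> 0\<close> that by blast
qed

end

section \<open>The exchange matrix of Q_m(g)\<close>

type_synonym arrow_family = "int \<times> int \<times> int \<times> int"

lemma nsteps_pos: "m > 0 \<Longrightarrow> nsteps g m > 0"
  by (cases g) (auto simp: nsteps_def)

lemma finite_Qverts: "finite (Qverts g m)"
proof -
  have "Qverts g m \<subseteq> {1..rank g} \<times> {0..<nsteps g m}" by (auto simp: Qverts_def)
  then show ?thesis by (rule finite_subset) simp
qed

lemma cstep_cases: "cstep g i = 1 \<or> cstep g i = ratio g"
  by (cases g) auto

lemma ratio_pos: "1 \<le> ratio g"
  by (cases g) auto

lemma cstep_pos: "1 \<le> cstep g i"
  using cstep_cases[of g i] ratio_pos[of g] by auto

lemma cstep_dvd_nsteps: "cstep g i dvd nsteps g m"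
  unfolding nsteps_def using cstep_cases[of g i] by auto

lemma two_le_nsteps_div_cstep:
  assumes "2 \<le> m"
  shows "2 \<le> nsteps g m div cstep g i"
proof (cases "cstep g i = 1")
  case True
  have "int m \<le> ratio g * int m" using mult_right_mono[OF ratio_pos[of g], of "int m"] by simp
  moreover have "nsteps g m div cstep g i = ratio g * int m" using True by (simp add: nsteps_def)
  ultimately show ?thesis using assms by linarith
next
  case False
  then have "cstep g i = ratio g" using cstep_cases by blast
  then show ?thesis using assms ratio_pos[of g] by (simp add: nsteps_def)
qed

lemma sum_sum_list_swap:
  "(\<Sum>t\<in>T. sum_list (map (f t) xs)) = sum_list (map (\<lambda>x. \<Sum>t\<in>T. f t x) xs)"
  by (induction xs) (simp_all add: sum.distrib)

lemma mod_add_eq_iff: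
  fixes N t c s :: int
  assumes "0 < N" "0 \<le> t" "t < N"
  shows "(t + c) mod N = s \<longleftrightarrow> 0 \<le> s \<and> s < N \<and> t = (s - c) mod N"
proof
  assume h: "(t + c) mod N = s"
  have "(s - c) mod N = ((t + c) mod N - c) mod N" using h by simp
  also have "\<dots> = t" using assms by (simp add: mod_diff_left_eq)
  moreover have "0 \<le> (t + c) mod N" "(t + c) mod N < N" using assms(1) by simp_all
  ultimately show "0 \<le> s \<and> s < N \<and> t = (s - c) mod N" using h by simp
next
  assume h: "0 \<le> s \<and> s < N \<and> t = (s - c) mod N"
  then have "(t + c) mod N = (s - c + c) mod N" by (simp add: mod_add_left_eq)
  then show "(t + c) mod N = s" using h by simp
qed

lemma sum_mod_add_indicator:
  fixes N c s :: int
  assumes "0 < N"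
  shows "(\<Sum>t\<in>{0..<N}. if (t + c) mod N = s \<and> P t then 1 else 0 :: int)
       = (if 0 \<le> s \<and> s < N \<and> P ((s - c) mod N) then 1 else 0)"
proof -
  define t\<^sub>0 where "t\<^sub>0 = (s - c) mod N"
  have "t\<^sub>0 \<in> {0..<N}" using assms by (simp add: t\<^sub>0_def)
  have "(\<Sum>t\<in>{0..<N}. if (t + c) mod N = s \<and> P t then 1 else 0 :: int)
      = (\<Sum>t\<in>{0..<N}. if t = t\<^sub>0 then (if 0 \<le> s \<and> s < N \<and> P t\<^sub>0 then 1 else 0) else 0)"
    by (rule sum.cong) (auto simp: mod_add_eq_iff[OF assms] t\<^sub>0_def)
  also have "\<dots> = (if 0 \<le> s \<and> s < N \<and> P t\<^sub>0 then 1 else 0)" using \<open>t\<^sub>0 \<in> {0..<N}\<close> by simp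
  finally show ?thesis by (simp add: t\<^sub>0_def)
qed

text \<open>The net number of arrows u \<rightarrow> v belonging to the family f, the time parameter
  of the family being summed out.\<close>
fun family_arrows :: "int \<Rightarrow> vertex \<Rightarrow> vertex \<Rightarrow> arrow_family \<Rightarrow> int" where
  "family_arrows N (a, z) (b, z') (fa, fx, fb, fy) =
      (if fa = a \<and> fb = b \<and> 0 \<le> z' \<and> z' < N \<and> (z' - fy + fx) mod N = z then 1 else 0)
    - (if fa = b \<and> fb = a \<and> 0 \<le> z \<and> z < N \<and> (z - fy + fx) mod N = z' then 1 else 0)"

lemma Qeps_eq_sum_families:
  assumes "m > 0"
  shows "Qeps g m u v = sum_list (map (family_arrows (nsteps g m) u v) (arrow_families g))"
proof -
  define N where "N = nsteps g m"
  have N: "0 < N" using nsteps_pos[OF assms] by (simp add: N_def)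
  obtain a z b z' where uv: "u = (a, z)" "v = (b, z')" by fastforce
  have count: "(\<Sum>t\<in>{0..<N}. if (fa, (t + fx) mod N) = (a', y) \<and> (fb, (t + fy) mod N) = (b', y') then 1 else 0)
      = (if fa = a' \<and> fb = b' \<and> 0 \<le> y' \<and> y' < N \<and> (y' - fy + fx) mod N = y then 1 else (0::int))"
    for fa fx fb fy a' b' y y' :: int
  proof -
    have "(\<Sum>t\<in>{0..<N}. if (fa, (t + fx) mod N) = (a', y) \<and> (fb, (t + fy) mod N) = (b', y') then 1 else 0)
        = (\<Sum>t\<in>{0..<N}. if (t + fy) mod N = y' \<and> (fa = a' \<and> fb = b' \<and> (t + fx) mod N = y) then 1 else (0::int))"
      by (intro sum.cong) auto
    also have "\<dots> = (if fa = a' \<and> fb = b' \<and> 0 \<le> y' \<and> y' < N \<and> ((y' - fy) mod N + fx) mod N = y then 1 else 0)"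
      unfolding sum_mod_add_indicator[OF N] by (simp only: conj_ac)
    finally show ?thesis by (simp add: mod_add_left_eq)
  qed
  show ?thesis
    unfolding Qeps_def N_def[symmetric] sum_sum_list_swap uv
    apply (intro arg_cong[where f = sum_list] map_cong refl)
    subgoal for f by (cases f) (simp only: prod.case sum_subtractf count family_arrows.simps)
    done
qed

lemma family_arrows_swap: "family_arrows N v u f = - family_arrows N u v f"
  by (cases u; cases v; cases f) simp

lemma skew_Qeps:
  assumes "m > 0"
  shows "skew (Qeps g m)"
  unfolding skew_def
proof (intro allI)
  fix u v
  have "sum_list (map (family_arrows N u v) fs) = - sum_list (map (family_arrows N v u) fs)" for N fs
    by (induction fs) (simp_all add: family_arrows_swap[of _ u v])
  then show "Qeps g m u v = - Qeps g m v u"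
    by (simp add: Qeps_eq_sum_families[OF assms])
qed

section \<open>Pairing of the arrow families\<close>

definition self_families :: "lie_type \<Rightarrow> arrow_family list" where
  "self_families g = map (\<lambda>k. (k, 0, k, cstep g k)) [1..rank g]"

fun opposite_pair :: "lie_type \<Rightarrow> arrow_family \<times> arrow_family \<Rightarrow> bool" where
  "opposite_pair g ((a, x, b, y), (a', x', b', y')) \<longleftrightarrow> a \<noteq> b \<and> a' = b \<and> b' = a
     \<and> cstep g a dvd (x - y + x' - y') \<and> cstep g b dvd (x - y + x' - y')"

text \<open>Besides the families v^k_n \<rightarrow> v^k_(n+d_k) forming the cycles, the arrow families come
  in pairs i \<rightarrow> j, j \<rightarrow> i whose total time shift is a multiple of both d_i and d_j.
  This is what makes every cycle P_(i,\<gamma>) balanced. Quantifying over all weights \<phi> says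
  that arrow_families g is, as a multiset, the self families together with the pairs.\<close>
definition paired_families :: "lie_type \<Rightarrow> (arrow_family \<times> arrow_family) list \<Rightarrow> bool" where
  "paired_families g prs \<longleftrightarrow>
     (\<forall>\<phi> :: arrow_family \<Rightarrow> int. sum_list (map \<phi> (arrow_families g))
        = sum_list (map \<phi> (self_families g)) + sum_list (map (\<lambda>(f\<^sub>1, f\<^sub>2). \<phi> f\<^sub>1 + \<phi> f\<^sub>2) prs))
     \<and> (\<forall>pr\<in>set prs. opposite_pair g pr)"

lemma sum_list_concat_map_pair:
  "sum_list (map \<phi> (concat (map (\<lambda>x. [F\<^sub>1 x, F\<^sub>2 x]) xs)))
   = sum_list (map (\<lambda>(u, v). \<phi> u + \<phi> v) (map (\<lambda>x. (F\<^sub>1 x, F\<^sub>2 x)) xs))"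
  by (induction xs) (auto simp: add.assoc)

lemma sum_list_concat_map_pair_split:
  "sum_list (map \<phi> (concat (map (\<lambda>(i, j). [F\<^sub>1 i j, F\<^sub>2 i j]) xs)))
   = sum_list (map (\<lambda>(u, v). \<phi> u + \<phi> v) (map (\<lambda>(i, j). (F\<^sub>1 i j, F\<^sub>2 i j)) xs))"
  by (induction xs) (auto simp: add.assoc)

lemma upto_snoc: "1 \<le> l \<Longrightarrow> [1..l] = [1..l - 1] @ [l::int]"
  by (metis upto_rec2)

lemma paired_families_simply_laced:
  assumes "g = TA l \<or> g = TD l \<or> g = TE l"
  shows "paired_families g (map (\<lambda>(i, j). ((i, 0, j, 0), (j, 1, i, 0))) (dynkin_arrows g))"
proof -
  have fams: "arrow_families g = map (\<lambda>i. (i, 0, i, 1)) [1..rank g]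
      @ concat (map (\<lambda>(i, j). [(i, 0, j, 0), (j, 1, i, 0)]) (dynkin_arrows g))"
    and cstep: "cstep g k = 1" for k
    using assms by (auto simp del: dynkin_arrows.simps)
  have "(i, j) \<in> set (dynkin_arrows g) \<Longrightarrow> i \<noteq> j" for i j
    using assms by auto
  then show ?thesis
    unfolding paired_families_def fams self_families_def sum_list_append map_append
      sum_list_concat_map_pair_split
    by (auto simp: cstep)
qed

lemma paired_families_B:
  assumes "valid_type (TB l)"
  shows "paired_families (TB l)
    (map (\<lambda>k. ((k, 0, k - 1, 0), (k - 1, 2, k, 0))) [2..int l - 1]
     @ [((int l, 0, int l - 1, -1), (int l - 1, 1, int l, 0))])"
proof -
  have "self_families (TB l) = map (\<lambda>k. (k, 0, k, 2)) [1..int l - 1] @ [(int l, 0, int l, 1)]"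
    unfolding self_families_def using assms by (simp add: upto_snoc)
  then show ?thesis
    unfolding paired_families_def arrow_families.simps sum_list_append map_append
      sum_list_concat_map_pair
    by (simp add: algebra_simps)
qed

lemma paired_families_C:
  assumes "valid_type (TC l)"
  shows "paired_families (TC l)
    (map (\<lambda>k. ((k, 0, k - 1, 0), (k - 1, 1, k, 0))) [2..int l - 1]
     @ [((int l, 0, int l - 1, 0), (int l - 1, 2, int l, 0))])"
proof -
  have "self_families (TC l) = map (\<lambda>k. (k, 0, k, 1)) [1..int l - 1] @ [(int l, 0, int l, 2)]"
    unfolding self_families_def using assms by (simp add: upto_snoc)
  then show ?thesis
    unfolding paired_families_def arrow_families.simps sum_list_append map_append
      sum_list_concat_map_pair
    by (simp add: algebra_simps)
qed

lemma paired_families_F4: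
  "paired_families TF4 [((2, 0, 1, 0), (1, 2, 2, 0)), ((3, 0, 2, -1), (2, 1, 3, 0)), ((4, 0, 3, 0), (3, 1, 4, 0))]"
proof -
  have "self_families TF4 = [(1, 0, 1, 2), (2, 0, 2, 2), (3, 0, 3, 1), (4, 0, 4, 1)]"
    unfolding self_families_def by (simp add: upto.simps)
  then show ?thesis unfolding paired_families_def by (simp add: algebra_simps)
qed

lemma paired_families_G2: "paired_families TG2 [((2, 0, 1, 0), (1, 3, 2, 0))]"
proof -
  have "self_families TG2 = [(1, 0, 1, 1), (2, 0, 2, 3)]"
    unfolding self_families_def by (simp add: upto.simps)
  then show ?thesis unfolding paired_families_def by (simp add: algebra_simps)
qed

lemma paired_families_exists: "valid_type g \<Longrightarrow> \<exists>prs. paired_families g prs"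
  by (cases g) (use paired_families_simply_laced paired_families_B paired_families_C
      paired_families_F4 paired_families_G2 in blast)+

lemma sum_families_on_row:
  fixes \<chi> :: "arrow_family \<Rightarrow> int"
  assumes "paired_families g prs" "1 \<le> i" "i \<le> rank g"
    and between_rows: "\<And>a x b y. a \<noteq> b \<Longrightarrow> \<chi> (a, x, b, y) = 0"
    and other_rows: "\<And>k. k \<noteq> i \<Longrightarrow> \<chi> (k, 0, k, cstep g k) = 0"
  shows "sum_list (map \<chi> (arrow_families g)) = \<chi> (i, 0, i, cstep g i)"
proof -
  have "(\<lambda>(f\<^sub>1, f\<^sub>2). \<chi> f\<^sub>1 + \<chi> f\<^sub>2) pr = 0" if "pr \<in> set prs" for pr
  proof -
    obtain a x b y a' x' b' y' where pr: "pr = ((a, x, b, y), (a', x', b', y'))"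
      by (metis prod.exhaust)
    then have "a \<noteq> b" "a' = b" "b' = a"
      using assms(1) that by (auto simp: paired_families_def)
    then show ?thesis using between_rows by (simp add: pr)
  qed
  then have pairs: "sum_list (map (\<lambda>(f\<^sub>1, f\<^sub>2). \<chi> f\<^sub>1 + \<chi> f\<^sub>2) prs) = 0"
    by (metis (no_types) map_cong sum_list_0)
  have "sum_list (map \<chi> (self_families g)) = (\<Sum>k\<in>set [1..rank g]. \<chi> (k, 0, k, cstep g k))"
    unfolding self_families_def by (simp add: o_def sum_list_distinct_conv_sum_set)
  also have "\<dots> = (\<Sum>k\<in>{1..rank g}. if k = i then \<chi> (i, 0, i, cstep g i) else 0)"
    by (rule sum.cong) (auto simp: other_rows)
  also have "\<dots> = \<chi> (i, 0, i, cstep g i)" using assms(2,3) by simp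
  finally show ?thesis
    using assms(1) pairs unfolding paired_families_def by simp
qed

lemma Qeps_same_row:
  assumes "valid_type g" "m > 0" "1 \<le> i" "i \<le> rank g"
    and "0 \<le> z" "z < nsteps g m" "0 \<le> z'" "z' < nsteps g m"
  shows "Qeps g m (i, z) (i, z') = (if (z' - cstep g i) mod nsteps g m = z then 1 else 0)
                                 - (if (z - cstep g i) mod nsteps g m = z' then 1 else 0)"
proof -
  obtain prs where prs: "paired_families g prs" using paired_families_exists[OF assms(1)] by blast
  have "Qeps g m (i, z) (i, z') = sum_list (map (family_arrows (nsteps g m) (i, z) (i, z')) (arrow_families g))"
    by (rule Qeps_eq_sum_families[OF assms(2)])
  also have "\<dots> = family_arrows (nsteps g m) (i, z) (i, z') (i, 0, i, cstep g i)"
    by (rule sum_families_on_row[OF prs assms(3,4)]) auto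
  finally show ?thesis using assms(5-8) by simp
qed

section \<open>The cycles P_(i,\<gamma>)\<close>

text \<open>The net number of arrows of the family f from the vertices v^i_t with t mod c = \<gamma>
  to the vertex v^b_z.\<close>
definition family_flux :: "int \<Rightarrow> int \<Rightarrow> int \<Rightarrow> int \<Rightarrow> int \<Rightarrow> arrow_family \<Rightarrow> int" where
  "family_flux c i b z \<gamma> f = (case f of (fa, fx, fb, fy) \<Rightarrow>
     (if fa = i \<and> fb = b \<and> (z - fy + fx) mod c = \<gamma> then 1 else 0)
   - (if fa = b \<and> fb = i \<and> (z + fy - fx) mod c = \<gamma> then 1 else 0))"

lemma family_flux_self: "family_flux (cstep g i) i b z \<gamma> (k, 0, k, cstep g k) = 0"
proof -
  have "(z - cstep g i) mod cstep g i = (z + cstep g i) mod cstep g i" by simp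
  then show ?thesis unfolding family_flux_def by auto
qed

lemma family_flux_opposite_pair:
  assumes "opposite_pair g pr"
  shows "family_flux (cstep g i) i b z \<gamma> (fst pr) + family_flux (cstep g i) i b z \<gamma> (snd pr) = 0"
proof -
  obtain a x b' y a' x' b'' y' where pr: "pr = ((a, x, b', y), (a', x', b'', y'))"
    by (metis prod.exhaust)
  have h: "a \<noteq> b'" "a' = b'" "b'' = a" "cstep g a dvd (x - y + x' - y')" "cstep g b' dvd (x - y + x' - y')"
    using assms by (auto simp: pr)
  consider "a = i" | "b' = i" | "a \<noteq> i" "b' \<noteq> i" by blast
  then show ?thesis
  proof cases
    case 1
    then have "(z - y + x) mod cstep g i = (z + y' - x') mod cstep g i"
      using h(4) by (simp add: mod_eq_dvd_iff algebra_simps)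
    then show ?thesis using 1 h unfolding family_flux_def pr by auto
  next
    case 2
    then have "cstep g i dvd (z + y - x) - (z - y' + x')"
      using h(5) dvd_minus_iff[of "cstep g b'" "x - y + x' - y'"] by (simp add: algebra_simps)
    then have "(z + y - x) mod cstep g i = (z - y' + x') mod cstep g i"
      by (simp add: mod_eq_dvd_iff)
    then show ?thesis using 2 h unfolding family_flux_def pr by auto
  next
    case 3
    then show ?thesis using h unfolding family_flux_def pr by auto
  qed
qed

lemma sum_family_flux:
  assumes "paired_families g prs"
  shows "sum_list (map (family_flux (cstep g i) i b z \<gamma>) (arrow_families g)) = 0"
proof -
  have "sum_list (map (family_flux (cstep g i) i b z \<gamma>) (self_families g)) = 0"
    unfolding self_families_def by (simp add: family_flux_self o_def)
  moreover have "sum_list (map (\<lambda>(f\<^sub>1, f\<^sub>2). family_flux (cstep g i) i b z \<gamma> f\<^sub>1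
      + family_flux (cstep g i) i b z \<gamma> f\<^sub>2) prs) = 0"
    using assms family_flux_opposite_pair[of g _ i b z \<gamma>] unfolding paired_families_def
    by (metis (no_types, lifting) case_prod_beta map_cong sum_list_0)
  ultimately show ?thesis using assms unfolding paired_families_def by simp
qed

lemma sum_indicator_progression:
  fixes X \<gamma> c :: int
  assumes "1 \<le> c" "0 \<le> \<gamma>" "\<gamma> < c" "0 \<le> X" "X < int p * c"
  shows "(\<Sum>k\<in>{0..<p}. if X = \<gamma> + int k * c then 1 else 0 :: int) = (if X mod c = \<gamma> then 1 else 0)"
proof (cases "X mod c = \<gamma>")
  case True
  define k\<^sub>0 where "k\<^sub>0 = nat (X div c)"
  have "int k\<^sub>0 = X div c" using assms by (simp add: k\<^sub>0_def pos_imp_zdiv_nonneg_iff)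
  then have X: "X = \<gamma> + int k\<^sub>0 * c" using div_mult_mod_eq[of X c] True by simp
  then have "int k\<^sub>0 * c < int p * c" using assms(2,5) by linarith
  then have "k\<^sub>0 < p" using assms(1) by simp
  have "X = \<gamma> + int k * c \<longleftrightarrow> k = k\<^sub>0" for k
    using X assms(1) by auto
  then have "(\<Sum>k\<in>{0..<p}. if X = \<gamma> + int k * c then 1 else 0 :: int)
      = (\<Sum>k\<in>{0..<p}. if k = k\<^sub>0 then 1 else 0)"
    by (intro sum.cong) simp_all
  then show ?thesis using True \<open>k\<^sub>0 < p\<close> by simp
next
  case False
  have "X \<noteq> \<gamma> + int k * c" for k
    using False assms by auto
  then show ?thesis using False by simp
qed

lemma progression_step_mod_iff:
  fixes \<gamma> c :: int and p a b :: nat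
  assumes "1 \<le> c" "0 \<le> \<gamma>" "\<gamma> < c" "a < p" "b < p"
  shows "(\<gamma> + int a * c + c) mod (int p * c) = \<gamma> + int b * c \<longleftrightarrow> b = Suc a mod p"
proof (cases "Suc a < p")
  case True
  have "\<gamma> + int a * c + c < int (Suc (Suc a)) * c" using assms(3) by (simp add: algebra_simps)
  also have "\<dots> \<le> int p * c" using True assms(1) by (intro mult_right_mono) auto
  finally have "(\<gamma> + int a * c + c) mod (int p * c) = \<gamma> + int (Suc a) * c"
    using assms(1,2) by (simp add: algebra_simps)
  then show ?thesis using True assms(1) by auto
next
  case False
  then have "p = Suc a" using assms(4) by simp
  then have shift: "\<gamma> + int a * c + c = \<gamma> + int p * c" by (simp add: algebra_simps)
  have "c \<le> int p * c" using assms(1) \<open>p = Suc a\<close> by (simp add: mult_le_cancel_right1)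
  then have "\<gamma> < int p * c" using assms(3) by linarith
  then have "(\<gamma> + int a * c + c) mod (int p * c) = \<gamma>"
    unfolding shift mod_add_self2 using assms(2) by simp
  then show ?thesis using \<open>p = Suc a\<close> assms(1) by auto
qed

lemma prod_power_int_sum:
  "finite C \<Longrightarrow> (\<kappa>::complex) \<noteq> 0 \<Longrightarrow> (\<Prod>w\<in>C. \<kappa> powi n w) = \<kappa> powi (\<Sum>w\<in>C. n w)"
  by (induction C rule: finite_induct) (simp_all add: power_int_add)

lemma pstar_scale_on:
  assumes "C \<subseteq> Qverts g m" "\<kappa> \<noteq> 0" "(\<Sum>w\<in>C. Qeps g m u w) = 0"
  shows "pstar g m (scale_on C \<kappa> A) u = pstar g m A u"
proof -
  have "pstar g m (scale_on C \<kappa> A) u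
      = (\<Prod>w\<in>Qverts g m. (if w \<in> C then \<kappa> powi Qeps g m u w else 1) * A w powi Qeps g m u w)"
    unfolding pstar_def by (rule prod.cong) (auto simp: scale_on_def power_int_mult_distrib)
  also have "\<dots> = (\<Prod>w\<in>C. \<kappa> powi Qeps g m u w) * pstar g m A u"
    using assms(1) finite_Qverts[of g m]
    by (simp add: pstar_def prod.distrib prod.If_cases Int_absorb1)
  also have "(\<Prod>w\<in>C. \<kappa> powi Qeps g m u w) = 1"
    using prod_power_int_sum[OF finite_subset[OF assms(1) finite_Qverts] assms(2)] assms(3) by simp
  finally show ?thesis by simp
qed

locale Qm_cycle =
  fixes g :: lie_type and m :: nat and i \<gamma> :: int
  assumes valid_g: "valid_type g" and two_le_m: "2 \<le> m"
    and i_bounds: "1 \<le> i" "i \<le> rank g" and \<gamma>_bounds: "0 \<le> \<gamma>" "\<gamma> < cstep g i"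
begin

abbreviation "c \<equiv> cstep g i"
abbreviation "N \<equiv> nsteps g m"
abbreviation "len \<equiv> nat (N div c)"
abbreviation "vs \<equiv> cycle_verts g m i \<gamma>"

lemma c_pos: "1 \<le> c"
  by (rule cstep_pos)

lemma m_pos: "m > 0"
  using two_le_m by simp

lemma N_pos: "0 < N"
  using nsteps_pos[OF m_pos] by simp

lemma N_eq: "N = int len * c"
  using cstep_dvd_nsteps[of g i m] N_pos c_pos by (simp add: pos_imp_zdiv_nonneg_iff)

lemma length_vs: "length vs = len"
  by (simp add: cycle_verts_def)

lemma nth_vs:
  assumes "k < len"
  shows "vs ! k = (i, \<gamma> + int k * c)" and "0 \<le> \<gamma> + int k * c" and "\<gamma> + int k * c < N"
proof -
  have "\<gamma> + int k * c < int (Suc k) * c" using \<gamma>_bounds by (simp add: algebra_simps)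
  also have "\<dots> \<le> int len * c" using assms c_pos by (intro mult_right_mono) auto
  finally show "\<gamma> + int k * c < N" using N_eq by simp
  moreover show "0 \<le> \<gamma> + int k * c" using \<gamma>_bounds c_pos by simp
  ultimately show "vs ! k = (i, \<gamma> + int k * c)" using assms by (simp add: cycle_verts_def)
qed

lemma distinct_vs: "distinct vs"
  unfolding distinct_conv_nth length_vs using c_pos by (auto simp: nth_vs)

lemma set_vs_subset: "set vs \<subseteq> Qverts g m"
proof
  fix x assume "x \<in> set vs"
  then obtain k where "k < len" "x = vs ! k" by (auto simp: in_set_conv_nth length_vs)
  then show "x \<in> Qverts g m" using nth_vs[of k] i_bounds by (simp add: Qverts_def)
qed

lemma Qeps_on_cycle:
  assumes "a < len" "b < len"
  shows "Qeps g m (vs ! a) (vs ! b) = (if b = Suc a mod len then 1 else 0) - (if a = Suc b mod len then 1 else 0)"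
proof -
  have step: "(\<gamma> + int y * c - c) mod N = \<gamma> + int x * c \<longleftrightarrow> y = Suc x mod len"
    if "x < len" "y < len" for x y
  proof -
    have "(\<gamma> + int y * c - c) mod N = \<gamma> + int x * c \<longleftrightarrow> (\<gamma> + int x * c + c) mod N = \<gamma> + int y * c"
      using mod_add_eq_iff[OF N_pos nth_vs(2,3)[OF that(1)], of c "\<gamma> + int y * c"] nth_vs(2,3)[OF that(2)]
      by metis
    also have "\<dots> \<longleftrightarrow> y = Suc x mod len"
      using progression_step_mod_iff[OF c_pos \<gamma>_bounds that] by (simp only: N_eq[symmetric])
    finally show ?thesis .
  qed
  have "Qeps g m (vs ! a) (vs ! b) = Qeps g m (i, \<gamma> + int a * c) (i, \<gamma> + int b * c)"
    by (simp only: nth_vs assms)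
  also have "\<dots> = (if (\<gamma> + int b * c - c) mod N = \<gamma> + int a * c then 1 else 0)
      - (if (\<gamma> + int a * c - c) mod N = \<gamma> + int b * c then 1 else 0)"
    by (rule Qeps_same_row[OF valid_g m_pos i_bounds nth_vs(2,3)[OF assms(1)] nth_vs(2,3)[OF assms(2)]])
  finally show ?thesis by (simp only: step assms)
qed

lemma sum_indicator_cycle:
  "(\<Sum>k\<in>{0..<len}. if Y mod N = \<gamma> + int k * c then 1 else 0 :: int) = (if Y mod c = \<gamma> then 1 else 0)"
proof -
  have "0 \<le> Y mod N" "Y mod N < int len * c" using N_pos N_eq by simp_all
  then have "(\<Sum>k\<in>{0..<len}. if Y mod N = \<gamma> + int k * c then 1 else 0 :: int) = (if Y mod N mod c = \<gamma> then 1 else 0)"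
    using sum_indicator_progression[OF c_pos \<gamma>_bounds] by simp
  also have "Y mod N mod c = Y mod c" using cstep_dvd_nsteps by (simp add: mod_mod_cancel)
  finally show ?thesis .
qed

lemma sum_family_arrows_cycle:
  "(\<Sum>k\<in>{0..<len}. family_arrows N (i, \<gamma> + int k * c) (b, z) f)
     = (if 0 \<le> z \<and> z < N then family_flux c i b z \<gamma> f else 0)"
proof -
  obtain fa fx fb fy where f: "f = (fa, fx, fb, fy)" by (cases f)
  have "(\<Sum>k\<in>{0..<len}. if fa = i \<and> fb = b \<and> 0 \<le> z \<and> z < N \<and> (z - fy + fx) mod N = \<gamma> + int k * c then 1 else 0 :: int)
      = (if fa = i \<and> fb = b \<and> 0 \<le> z \<and> z < N \<and> (z - fy + fx) mod c = \<gamma> then 1 else 0)"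
    by (cases "fa = i \<and> fb = b \<and> 0 \<le> z \<and> z < N") (auto simp: sum_indicator_cycle intro!: sum.neutral)
  moreover have "(\<Sum>k\<in>{0..<len}. if fa = b \<and> fb = i \<and> 0 \<le> \<gamma> + int k * c \<and> \<gamma> + int k * c < N
          \<and> (\<gamma> + int k * c - fy + fx) mod N = z then 1 else 0 :: int)
      = (if fa = b \<and> fb = i \<and> 0 \<le> z \<and> z < N \<and> (z + fy - fx) mod c = \<gamma> then 1 else 0)"
  proof -
    have "(\<gamma> + int k * c - fy + fx) mod N = z \<longleftrightarrow> 0 \<le> z \<and> z < N \<and> (z + fy - fx) mod N = \<gamma> + int k * c"
      if "k < len" for k
    proof -
      have "\<gamma> + int k * c - fy + fx = \<gamma> + int k * c + (fx - fy)" "z - (fx - fy) = z + fy - fx"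
        by simp_all
      then show ?thesis
        using mod_add_eq_iff[OF N_pos nth_vs(2,3)[OF that], of "fx - fy" z] by metis
    qed
    then have "(\<Sum>k\<in>{0..<len}. if fa = b \<and> fb = i \<and> 0 \<le> \<gamma> + int k * c \<and> \<gamma> + int k * c < N
          \<and> (\<gamma> + int k * c - fy + fx) mod N = z then 1 else 0 :: int)
        = (\<Sum>k\<in>{0..<len}. if fa = b \<and> fb = i \<and> 0 \<le> z \<and> z < N \<and> (z + fy - fx) mod N = \<gamma> + int k * c then 1 else 0)"
      using nth_vs(2,3) by (intro sum.cong) auto
    then show ?thesis
      by (cases "fa = b \<and> fb = i \<and> 0 \<le> z \<and> z < N") (auto simp: sum_indicator_cycle intro!: sum.neutral)
  qed
  ultimately show ?thesis
    by (simp add: f family_flux_def sum_subtractf)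
qed

lemma Qeps_cycle_balanced: "(\<Sum>k\<in>{0..<len}. Qeps g m (vs ! k) w) = 0"
proof -
  obtain prs where prs: "paired_families g prs" using paired_families_exists[OF valid_g] by blast
  obtain b z where w: "w = (b, z)" by fastforce
  have "(\<Sum>k\<in>{0..<len}. Qeps g m (vs ! k) w)
      = (\<Sum>k\<in>{0..<len}. sum_list (map (family_arrows N (i, \<gamma> + int k * c) (b, z)) (arrow_families g)))"
    by (intro sum.cong) (simp_all add: nth_vs w Qeps_eq_sum_families[OF m_pos])
  also have "\<dots> = sum_list (map (\<lambda>f. if 0 \<le> z \<and> z < N then family_flux c i b z \<gamma> f else 0) (arrow_families g))"
    by (simp add: sum_sum_list_swap sum_family_arrows_cycle)
  finally have sum_flux: "(\<Sum>k\<in>{0..<len}. Qeps g m (vs ! k) w)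
      = sum_list (map (\<lambda>f. if 0 \<le> z \<and> z < N then family_flux c i b z \<gamma> f else 0) (arrow_families g))" .
  show ?thesis
  proof (cases "0 \<le> z \<and> z < N")
    case True
    then show ?thesis using sum_flux sum_family_flux[OF prs, of i b z \<gamma>] by simp
  next
    case False
    then show ?thesis using sum_flux by (simp only: if_not_P[OF False] if_False sum_list_0)
  qed
qed

sublocale balanced_cycle "Qverts g m" "Qeps g m" vs len
proof
  show "2 \<le> len" using two_le_nsteps_div_cstep[OF two_le_m, of g i] by linarith
qed (simp_all add: finite_Qverts set_vs_subset distinct_vs length_vs skew_Qeps[OF m_pos]
      Qeps_on_cycle Qeps_cycle_balanced)

lemma Qeps_row_sum_cycle: "(\<Sum>w\<in>set vs. Qeps g m u w) = 0"
proof -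
  have "(\<Sum>w\<in>set vs. Qeps g m u w) = (\<Sum>k\<in>{0..<len}. Qeps g m u (vs ! k))"
    by (simp add: sum.distinct_set_conv_list[OF distinct_vs] sum_list_sum_nth length_vs atLeast0LessThan)
  also have "\<dots> = - (\<Sum>k\<in>{0..<len}. Qeps g m (vs ! k) u)"
    unfolding sum_negf[symmetric]
    using skew_Qeps[OF m_pos] unfolding skew_def by (intro sum.cong) blast+
  finally show ?thesis by (simp add: Qeps_cycle_balanced)
qed

lemma R_cycle_preserves_pstar:
  assumes "nonvanishing_along (Qverts g m) (R_seq vs) (Qeps g m, A)"
  obtains A' where "apply_steps (Qverts g m) (R_seq vs) (Qeps g m, A) = (Qeps g m, A')"
    and "pstar g m A' u = pstar g m A u"
proof -
  obtain \<kappa> where "\<kappa> \<noteq> 0" and steps: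
    "apply_steps (Qverts g m) (R_seq vs) (Qeps g m, A) = (Qeps g m, scale_on (set vs) \<kappa> A)"
    using R_seq_rescales_cycle[OF assms] by blast
  show ?thesis
    by (rule that[OF steps]) (rule pstar_scale_on[OF set_vs_subset \<open>\<kappa> \<noteq> 0\<close> Qeps_row_sum_cycle])
qed

end

lemma R_cycles_preserve_pstar:
  assumes "valid_type g" "2 \<le> m" "1 \<le> i" "i \<le> rank g" "\<forall>\<gamma>\<in>set \<Gamma>. 0 \<le> \<gamma> \<and> \<gamma> < cstep g i"
    and "nonvanishing_along (Qverts g m) (concat (map (\<lambda>\<gamma>. R_seq (cycle_verts g m i \<gamma>)) \<Gamma>)) (Qeps g m, A)"
  shows "\<exists>A'. apply_steps (Qverts g m) (concat (map (\<lambda>\<gamma>. R_seq (cycle_verts g m i \<gamma>)) \<Gamma>)) (Qeps g m, A)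
           = (Qeps g m, A') \<and> pstar g m A' u = pstar g m A u"
  using assms(5,6)
proof (induction \<Gamma> arbitrary: A)
  case Nil
  then show ?case by simp
next
  case (Cons \<gamma> \<Gamma>)
  interpret Qm_cycle g m i \<gamma>
    using assms(1-4) Cons.prems(1) by unfold_locales simp_all
  have now: "nonvanishing_along (Qverts g m) (R_seq vs) (Qeps g m, A)"
    and rest: "nonvanishing_along (Qverts g m) (concat (map (\<lambda>\<gamma>. R_seq (cycle_verts g m i \<gamma>)) \<Gamma>))
      (apply_steps (Qverts g m) (R_seq vs) (Qeps g m, A))"
    using Cons.prems(2) by (simp_all add: nonvanishing_along_append)
  obtain A\<^sub>1 where first: "apply_steps (Qverts g m) (R_seq vs) (Qeps g m, A) = (Qeps g m, A\<^sub>1)"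
    and "pstar g m A\<^sub>1 u = pstar g m A u"
    by (rule R_cycle_preserves_pstar[OF now])
  then show ?case
    using Cons.IH[of A\<^sub>1] Cons.prems(1) rest by simp
qed

theorem proposition3p5:
  fixes g :: lie_type and m :: nat and i :: int and u :: vertex
    and A :: "vertex \<Rightarrow> complex"
  assumes "valid_type g" and "m > 1"
    and "1 \<le> i" and "i \<le> rank g"
    and "u \<in> Qverts g m"
    and "\<forall>s\<in>set (trace (Qverts g m) (Ri_seq g m i) (Qeps g m, A)).
           \<forall>v\<in>Qverts g m. snd s v \<noteq> 0"
  shows "pstar g m (snd (last (trace (Qverts g m) (Ri_seq g m i) (Qeps g m, A)))) u
         = pstar g m A u"
proof -
  have "2 \<le> m" using assms(2) by simp
  have "\<forall>\<gamma>\<in>set (rev [0..cstep g i - 1]). 0 \<le> \<gamma> \<and> \<gamma> < cstep g i" by auto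
  moreover have "nonvanishing_along (Qverts g m)
      (concat (map (\<lambda>\<gamma>. R_seq (cycle_verts g m i \<gamma>)) (rev [0..cstep g i - 1]))) (Qeps g m, A)"
    using assms(6) unfolding nonvanishing_along_def Ri_seq_def .
  ultimately obtain A' where "apply_steps (Qverts g m) (Ri_seq g m i) (Qeps g m, A) = (Qeps g m, A')"
    and "pstar g m A' u = pstar g m A u"
    using R_cycles_preserve_pstar[OF assms(1) \<open>2 \<le> m\<close> assms(3,4)] unfolding Ri_seq_def by blast
  then show ?thesis by (simp add: last_trace)
qed

end
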